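(* Let $p\ge 1$ and $q\ge 3$ be integers. Then $\lambda_{\min}(\mathcal U(p,q)^c)$ is the least real root of the polynomial $$\begin{aligned}f(\lambda;p,q)={}&(-8+2p+2q)+(13-11p-7q+4pq)\lambda+(20-6q-4pq)\lambda^2+(-1+11p+7q-7pq)\lambda^3\\&+(-20+12p+12q-2pq)\lambda^4+(-16+6p+6q)\lambda^5+(-6+p+q)\lambda^6-\lambda^7.\end{aligned}$$ In particular $f(-2;p,q)=-10$ and $\lambda_{\min}(\mathcal U(p,q)^c)<-2$.
   Context: All graphs are simple and finite. For a graph $G$, $\lambda_{\min}(G)$ denotes the least eigenvalue of the adjacency matrix $A(G)$, and $G^c$ denotes the complement of $G$. $K_{1,m}$ is the star with $m$ edges; its vertex of degree $m$ is the center and the others are pendant vertices. $S_m^3$ denotes the graph of order $m$ obtained from $K_{1,m-1}$ by adding one edge between two of its pendant vertices. For integers $p\ge 1$, $q\ge 3$, $\mathcal U(p,q)$ is the graph of order $p+q+2$ obtained from disjoint copies of $K_{1,p}$ and $S_{q+1}^3$ by adding one edge joining a pendant vertex of $K_{1,p}$ to a pendant (degree-one) vertex of $S_{q+1}^3$. *)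

theory Defs
  imports "Jordan_Normal_Form.Char_Poly"
begin

text \<open>A simple graph on vertex set {0..<n} is given by a symmetric irreflexive
  edge predicate E on nat (only its restriction to {0..<n} matters).\<close>

definition adj_matrix :: "nat \<Rightarrow> (nat \<Rightarrow> nat \<Rightarrow> bool) \<Rightarrow> real mat" where
  "adj_matrix n E = mat n n (\<lambda>(i,j). if E i j then 1 else 0)"

definition compl_graph :: "(nat \<Rightarrow> nat \<Rightarrow> bool) \<Rightarrow> nat \<Rightarrow> nat \<Rightarrow> bool" where
  "compl_graph E i j \<longleftrightarrow> i \<noteq> j \<and> \<not> E i j"

definition lambda_min :: "nat \<Rightarrow> (nat \<Rightarrow> nat \<Rightarrow> bool) \<Rightarrow> real" where
  "lambda_min n E = Min {k. eigenvalue (adj_matrix n E) k}"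

text \<open>The graph U(p,q) on vertices {0..<p+q+2}:
  0 = centre of K_{1,p}, 1..p its pendant vertices;
  p+1 = centre of S^3_{q+1}, p+2..p+q+1 its pendant vertices, with the extra edge
  between p+2 and p+3; the joining edge goes from pendant 1 of the star to the
  degree-one vertex p+q+1 of S^3_{q+1} (degree one since q \<ge> 3).\<close>
definition U_base_edge :: "nat \<Rightarrow> nat \<Rightarrow> nat \<Rightarrow> nat \<Rightarrow> bool" where
  "U_base_edge p q i j \<longleftrightarrow>
     (i = 0 \<and> 1 \<le> j \<and> j \<le> p) \<or>
     (i = p + 1 \<and> p + 2 \<le> j \<and> j \<le> p + q + 1) \<or>
     (i = p + 2 \<and> j = p + 3) \<or>
     (i = 1 \<and> j = p + q + 1)"

definition U_graph :: "nat \<Rightarrow> nat \<Rightarrow> nat \<Rightarrow> nat \<Rightarrow> bool" where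
  "U_graph p q i j \<longleftrightarrow> U_base_edge p q i j \<or> U_base_edge p q j i"

definition f_poly :: "int \<Rightarrow> int \<Rightarrow> real \<Rightarrow> real" where
  "f_poly p q x =
     (-8 + 2*p + 2*q) + (13 - 11*p - 7*q + 4*p*q) * x + (20 - 6*q - 4*p*q) * x^2
   + (-1 + 11*p + 7*q - 7*p*q) * x^3 + (-20 + 12*p + 12*q - 2*p*q) * x^4
   + (-16 + 6*p + 6*q) * x^5 + (-6 + p + q) * x^6 - x^7"

end

theory Submission
  imports Defs "HOL-Real_Asymp.Real_Asymp"
begin

text \<open>The partition of the vertices of U(p,q) into the cells {0}, {1}, {2..p}, {p+1}, {p+2,p+3},
  {p+4..p+q}, {p+q+1} is equitable, for the graph and for its complement. An eigenvector of the
  complement whose eigenvalue is neither -1 nor 0 is constant on the cells, so its cell values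
  form a nonzero solution of the quotient system, and eliminating the unknowns gives f(k) = 0.
  Conversely, for a root k < -2 of f a column of the adjugate of the quotient system is a
  nonzero solution, which lifts to an eigenvector. Since f(-2) = -10 and f tends to +\<infinity>
  at -\<infinity>, f has a root below -2. Hence the least eigenvalue is below -2, so it is a root
  of f, and no root of f is smaller, since every root below -2 is an eigenvalue.\<close>

lemma compl_adj_mult_vec_nth:
  assumes v: "v \<in> carrier_vec n" and i: "i < n" and irrefl: "\<not> E i i"
  shows "(adj_matrix n (compl_graph E) *\<^sub>v v) $ i
           = (\<Sum>j<n. v $ j) - v $ i - (\<Sum>j | j < n \<and> E i j. v $ j)"
proof -
  let ?N = "{j. j < n \<and> E i j}" and ?C = "{j. j < n \<and> compl_graph E i j}"
  have "(adj_matrix n (compl_graph E) *\<^sub>v v) $ i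
          = (\<Sum>j<n. (if compl_graph E i j then 1 else 0) * v $ j)"
    using v i by (simp add: adj_matrix_def scalar_prod_def lessThan_atLeast0)
  also have "\<dots> = (\<Sum>j<n. if compl_graph E i j then v $ j else 0)"
    by (rule sum.cong) auto
  also have "\<dots> = (\<Sum>j\<in>?C. v $ j)"
    by (simp add: sum.inter_filter[symmetric] lessThan_def conj_commute)
  also have "\<dots> = (\<Sum>j<n. v $ j) - v $ i - (\<Sum>j\<in>?N. v $ j)"
  proof -
    have "{..<n} = {i} \<union> ?N \<union> ?C" using i by (auto simp: compl_graph_def)
    then have "(\<Sum>j<n. v $ j) = v $ i + (\<Sum>j\<in>?N. v $ j) + (\<Sum>j\<in>?C. v $ j)"
      using irrefl by (simp add: sum.union_disjoint compl_graph_def disjoint_iff)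
    then show ?thesis by simp
  qed
  finally show ?thesis .
qed

lemma finite_eigenvalues:
  fixes A :: "'a :: field mat"
  assumes "A \<in> carrier_mat n n"
  shows "finite {k. eigenvalue A k}"
proof -
  have "char_poly A \<noteq> 0"
    using degree_monic_char_poly[OF assms] by auto
  then have "finite {k. poly (char_poly A) k = 0}"
    by (rule poly_roots_finite)
  then show ?thesis
    using eigenvalue_root_char_poly[OF assms] by simp
qed

lemma finite_adj_matrix_eigenvalues: "finite {k. eigenvalue (adj_matrix n E) k}"
  by (rule finite_eigenvalues[of _ n]) (simp add: adj_matrix_def)

lemma lambda_min_le:
  assumes "eigenvalue (adj_matrix n E) k"
  shows "lambda_min n E \<le> k"
  unfolding lambda_min_def using finite_adj_matrix_eigenvalues assms by (intro Min_le) auto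

lemma eigenvalue_lambda_min:
  assumes "eigenvalue (adj_matrix n E) k"
  shows "eigenvalue (adj_matrix n E) (lambda_min n E)"
proof -
  have "lambda_min n E \<in> {k. eigenvalue (adj_matrix n E) k}"
    unfolding lambda_min_def using finite_adj_matrix_eigenvalues assms by (intro Min_in) auto
  then show ?thesis by simp
qed

lemma f_poly_minus_two: "f_poly p q (-2) = -10"
  by (simp add: f_poly_def)

lemma f_poly_root_below_minus_two: "\<exists>r < -2. f_poly p q r = 0"
proof -
  have "filterlim (f_poly p q) at_top at_bot"
    unfolding f_poly_def by real_asymp
  then have "eventually (\<lambda>x. 0 \<le> f_poly p q x) at_bot"
    unfolding filterlim_at_top by blast
  then obtain N where N: "\<And>x. x \<le> N \<Longrightarrow> 0 \<le> f_poly p q x"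
    unfolding eventually_at_bot_linorder by blast
  define x0 where "x0 = min N (-2)"
  have "isCont (f_poly p q) x" for x
    unfolding f_poly_def by (intro continuous_intros)
  moreover have "f_poly p q (-2) \<le> 0" "0 \<le> f_poly p q x0" "x0 \<le> -2"
    using N f_poly_minus_two by (auto simp: x0_def)
  ultimately obtain r where "r \<le> -2" "f_poly p q r = 0"
    using IVT2[of "f_poly p q" "-2" 0 x0] by blast
  moreover have "r \<noteq> -2"
    using \<open>f_poly p q r = 0\<close> f_poly_minus_two by auto
  ultimately show ?thesis by force
qed

lemma f_poly_of_nat:
  "f_poly (int p) (int q) k =
     (-8 + 2*real p + 2*real q) + (13 - 11*real p - 7*real q + 4*real p*real q) * k
   + (20 - 6*real q - 4*real p*real q) * k^2 + (-1 + 11*real p + 7*real q - 7*real p*real q) * k^3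
   + (-20 + 12*real p + 12*real q - 2*real p*real q) * k^4 + (-16 + 6*real p + 6*real q) * k^5
   + (-6 + real p + real q) * k^6 - k^7"
  by (simp add: f_poly_def)

text \<open>The eigen-equations (k+1) x_i + (sum of x_j over the neighbours j of i) = S of the
  complement, for a vector x constant on the cells: a on the centre 0 of the star, c on the
  pendant vertex 1 joined to p+q+1 (value h), b on the other pendant vertices 2..p, d on the
  centre p+1 of the triangle-star, e on the triangle vertices p+2, p+3 and g on the other pendant
  vertices p+4..p+q; S is the sum of all entries.\<close>
definition U_quotient_eqs ::
    "nat \<Rightarrow> nat \<Rightarrow> real \<Rightarrow> real \<Rightarrow> real \<Rightarrow> real \<Rightarrow> real \<Rightarrow> real \<Rightarrow> real \<Rightarrow> real \<Rightarrow> real \<Rightarrow> bool"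
  where
  "U_quotient_eqs p q k a b c d e g h S \<longleftrightarrow>
     (k+1)*a + (real p - 1)*b + c = S \<and>
     (k+1)*b + a = S \<and>
     (k+1)*c + a + h = S \<and>
     (k+1)*d + 2*e + (real q - 3)*g + h = S \<and>
     (k+2)*e + d = S \<and>
     (k+1)*g + d = S \<and>
     (k+1)*h + c + d = S \<and>
     a + (real p - 1)*b + c + d + 2*e + (real q - 3)*g + h = S"

definition U_cell_vec ::
    "nat \<Rightarrow> nat \<Rightarrow> real \<Rightarrow> real \<Rightarrow> real \<Rightarrow> real \<Rightarrow> real \<Rightarrow> real \<Rightarrow> real \<Rightarrow> real vec"
  where
  "U_cell_vec p q a b c d e g h = vec (p+q+2) (\<lambda>i.
     if i = 0 then a else if i = 1 then c else if i \<le> p then b else if i = p+1 then d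
     else if i \<le> p+3 then e else if i \<le> p+q then g else h)"

lemma dim_vec_U_cell_vec [simp]: "dim_vec (U_cell_vec p q a b c d e g h) = p+q+2"
  by (simp add: U_cell_vec_def)

lemma U_quotient_eqs_imp_root:
  assumes "U_quotient_eqs p q k a b c d e g h S"
    and "a \<noteq> 0 \<or> b \<noteq> 0 \<or> c \<noteq> 0 \<or> d \<noteq> 0 \<or> e \<noteq> 0 \<or> g \<noteq> 0 \<or> h \<noteq> 0"
  shows "f_poly (int p) (int q) k = 0"
proof -
  note eqs = assms(1)[unfolded U_quotient_eqs_def eq_iff_diff_eq_0[of _ S]]
  let ?f = "f_poly (int p) (int q) k"
  \<comment> \<open>The plain method name \<open>algebra\<close> is shadowed by an imported theory.\<close>
  have "?f * a = 0" "?f * b = 0" "?f * c = 0" "?f * d = 0" "?f * e = 0" "?f * g = 0" "?f * h = 0"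
    using eqs unfolding f_poly_of_nat by (elim conjE; Groebner_Basis.algebra)+
  then show ?thesis using assms(2) by auto
qed

text \<open>The witnesses form the column of the adjugate of the quotient system that belongs to its
  fifth equation: they solve the other equations identically in k, and the fifth one up to the
  residual f(k), the determinant of the system.\<close>
lemma U_quotient_eqs_solvable:
  assumes "f_poly (int p) (int q) k = 0" and "k < -2"
  shows "\<exists>a b c d e g h S. b \<noteq> 0 \<and> U_quotient_eqs p q k a b c d e g h S"
proof -
  define a where
    "a = 2*real p*k^4 + 6*real p*k^3 + 4*real p*k^2 - 2*k^5 - 8*k^4 - 12*k^3 - 4*k^2 + 4*k + 2"
  define b where "b = -2 * (k^3 * ((k+1)*(k+2)) - (2*k-1)*(k+1))"
  define c where "c = -4*real p*k^2 - 2*real p*k + 2*real p - 2*k^5 - 4*k^4 + 6*k^2 - 4"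
  define d where "d = -2*real p*k^4 - 4*real p*k^3 + 2*real p*k^2 + 4*real p*k
    - 2*k^4 - 6*k^3 - 8*k^2 - 2*k + 2"
  define e where "e = -2*real p*real q*k^3 - 3*real p*real q*k^2 + 2*real p*real q*k
    + real p*k^5 + 4*real p*k^4 + 8*real p*k^3 + 5*real p*k^2 - 8*real p*k + real p
    + real q*k^5 + 4*real q*k^4 + 4*real q*k^3 - real q*k^2 - 4*real q*k + real q
    - k^6 - 6*k^5 - 14*k^4 - 8*k^3 + 9*k^2 + 12*k - 5"
  define g where
    "g = 4*real p*k^3 + 6*real p*k^2 - 4*real p*k - 2*k^5 - 8*k^4 - 8*k^3 + 2*k^2 + 8*k - 2"
  define h where "h = 4*real p*k^3 + 6*real p*k^2 - 2*real p - 2*k^5 - 6*k^4 - 6*k^3 + 4*k + 2"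
  define S where "S = 2*real p*k^4 + 6*real p*k^3 + 4*real p*k^2
    - 2*k^6 - 10*k^5 - 18*k^4 - 12*k^3 + 2*k^2 + 4*k"
  have "b > 0"
  proof -
    have "k^3 < 0"
      using assms(2) by (simp add: power_less_zero_eq)
    moreover have "(k+1)*(k+2) > 0"
      using assms(2) by (simp add: zero_less_mult_iff)
    ultimately have "k^3 * ((k+1)*(k+2)) < 0"
      by (rule mult_neg_pos)
    moreover have "(2*k-1)*(k+1) > 0"
      using assms(2) by (simp add: zero_less_mult_iff)
    ultimately show ?thesis by (simp add: b_def)
  qed
  have "(k+1)*a + (real p - 1)*b + c = S" "(k+1)*b + a = S" "(k+1)*c + a + h = S"
    "(k+1)*d + 2*e + (real q - 3)*g + h = S" "(k+2)*e + d = S + f_poly (int p) (int q) k"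
    "(k+1)*g + d = S" "(k+1)*h + c + d = S"
    "a + (real p - 1)*b + c + d + 2*e + (real q - 3)*g + h = S"
    unfolding a_def b_def c_def d_def e_def g_def h_def S_def f_poly_of_nat
    by Groebner_Basis.algebra+
  then have "U_quotient_eqs p q k a b c d e g h S"
    unfolding U_quotient_eqs_def assms(1) by (simp only: add_0_right)
  moreover have "b \<noteq> 0"
    using \<open>b > 0\<close> by simp
  ultimately show ?thesis by blast
qed

lemma U_vertex_cases:
  fixes p q i :: nat
  assumes "i < p+q+2"
  obtains "i = 0" | "i = 1" | "2 \<le> i" "i \<le> p" | "i = p+1" | "i = p+2" | "i = p+3"
    | "p+4 \<le> i" "i \<le> p+q" | "i = p+q+1"
  using assms by linarith

context
  fixes p q :: nat
  assumes p: "1 \<le> p" and q: "3 \<le> q"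
begin

lemma U_graph_irrefl: "\<not> U_graph p q i i"
  using q by (auto simp: U_graph_def U_base_edge_def)

lemma U_neighbours_centre_K: "{j. j < p+q+2 \<and> U_graph p q 0 j} = {1..p}"
  using p q by (auto simp: U_graph_def U_base_edge_def)

lemma U_neighbours_joint_K: "{j. j < p+q+2 \<and> U_graph p q 1 j} = {0, p+q+1}"
  using p q by (auto simp: U_graph_def U_base_edge_def)

lemma U_neighbours_pendant_K:
  "2 \<le> i \<Longrightarrow> i \<le> p \<Longrightarrow> {j. j < p+q+2 \<and> U_graph p q i j} = {0}"
  using p q by (auto simp: U_graph_def U_base_edge_def)

lemma U_neighbours_centre_S: "{j. j < p+q+2 \<and> U_graph p q (p+1) j} = {p+2..p+q+1}"
  using p q by (auto simp: U_graph_def U_base_edge_def)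

lemma U_neighbours_triangle:
  "{j. j < p+q+2 \<and> U_graph p q (p+2) j} = {p+1, p+3}"
  "{j. j < p+q+2 \<and> U_graph p q (p+3) j} = {p+1, p+2}"
  using p q by (auto simp: U_graph_def U_base_edge_def)

lemma U_neighbours_pendant_S:
  "p+4 \<le> i \<Longrightarrow> i \<le> p+q \<Longrightarrow> {j. j < p+q+2 \<and> U_graph p q i j} = {p+1}"
  using p q by (auto simp: U_graph_def U_base_edge_def)

lemma U_neighbours_joint_S: "{j. j < p+q+2 \<and> U_graph p q (p+q+1) j} = {1, p+1}"
  using p q by (auto simp: U_graph_def U_base_edge_def)

lemma sum_U_vertices:
  fixes w :: "nat \<Rightarrow> real"
  shows "(\<Sum>j<p+q+2. w j) = w 0 + w 1 + (\<Sum>j=2..p. w j) + w (p+1) + w (p+2) + w (p+3)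
     + (\<Sum>j=p+4..p+q. w j) + w (p+q+1)"
proof -
  let ?V = "{0,1} \<union> {2..p} \<union> {p+1,p+2,p+3} \<union> {p+4..p+q} \<union> {p+q+1}"
  have "{..<p+q+2} = ?V"
    using p q by auto
  moreover have "(\<Sum>j\<in>?V. w j) = w 0 + w 1 + (\<Sum>j=2..p. w j) + w (p+1) + w (p+2) + w (p+3)
     + (\<Sum>j=p+4..p+q. w j) + w (p+q+1)"
    using p q by (subst sum.union_disjoint; auto)+
  ultimately show ?thesis by simp
qed

lemma U_cell_vec_nth:
  fixes a b c d e g h :: real
  shows "U_cell_vec p q a b c d e g h $ 0 = a" "U_cell_vec p q a b c d e g h $ 1 = c"
    "2 \<le> i \<Longrightarrow> i \<le> p \<Longrightarrow> U_cell_vec p q a b c d e g h $ i = b"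
    "U_cell_vec p q a b c d e g h $ (p+1) = d"
    "U_cell_vec p q a b c d e g h $ (p+2) = e" "U_cell_vec p q a b c d e g h $ (p+3) = e"
    "p+4 \<le> i \<Longrightarrow> i \<le> p+q \<Longrightarrow> U_cell_vec p q a b c d e g h $ i = g"
    "U_cell_vec p q a b c d e g h $ (p+q+1) = h"
  using p q by (simp_all add: U_cell_vec_def)

lemma U_cell_vec_pendant_sums:
  shows "(\<Sum>j=2..p. U_cell_vec p q a b c d e g h $ j) = (real p - 1) * b"
    and "(\<Sum>j=p+4..p+q. U_cell_vec p q a b c d e g h $ j) = (real q - 3) * g"
proof -
  have "(\<Sum>j=2..p. U_cell_vec p q a b c d e g h $ j) = (\<Sum>j=2..p. b)"
    by (rule sum.cong) (simp_all add: U_cell_vec_nth(3))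
  then show "(\<Sum>j=2..p. U_cell_vec p q a b c d e g h $ j) = (real p - 1) * b"
    using p by (simp add: of_nat_diff)
  have "(\<Sum>j=p+4..p+q. U_cell_vec p q a b c d e g h $ j) = (\<Sum>j=p+4..p+q. g)"
    by (rule sum.cong) (simp_all add: U_cell_vec_nth(7))
  then show "(\<Sum>j=p+4..p+q. U_cell_vec p q a b c d e g h $ j) = (real q - 3) * g"
    using q by (simp add: of_nat_diff)
qed

lemma sum_U_cell_vec:
  "(\<Sum>j<p+q+2. U_cell_vec p q a b c d e g h $ j)
     = a + (real p - 1)*b + c + d + 2*e + (real q - 3)*g + h"
  using sum_U_vertices[of "\<lambda>j. U_cell_vec p q a b c d e g h $ j"] U_cell_vec_pendant_sums
    U_cell_vec_nth[where a = a and b = b and c = c and d = d and e = e and g = g and h = h] p q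
  by (simp add: of_nat_diff)

lemma U_compl_mult_cell_vec:
  fixes a b c d e g h :: real
  defines "A \<equiv> adj_matrix (p+q+2) (compl_graph (U_graph p q))"
    and "w \<equiv> U_cell_vec p q a b c d e g h"
    and "T \<equiv> a + (real p - 1)*b + c + d + 2*e + (real q - 3)*g + h"
  shows "(A *\<^sub>v w) $ 0 = T - a - (c + (real p - 1)*b)"
    and "(A *\<^sub>v w) $ 1 = T - c - (a + h)"
    and "2 \<le> i \<Longrightarrow> i \<le> p \<Longrightarrow> (A *\<^sub>v w) $ i = T - b - a"
    and "(A *\<^sub>v w) $ (p+1) = T - d - (2*e + (real q - 3)*g + h)"
    and "(A *\<^sub>v w) $ (p+2) = T - e - (d + e)"
    and "(A *\<^sub>v w) $ (p+3) = T - e - (d + e)"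
    and "p+4 \<le> i \<Longrightarrow> i \<le> p+q \<Longrightarrow> (A *\<^sub>v w) $ i = T - g - d"
    and "(A *\<^sub>v w) $ (p+q+1) = T - h - (c + d)"
proof -
  have "w \<in> carrier_vec (p+q+2)"
    unfolding w_def by (rule carrier_vecI) simp
  have row: "(A *\<^sub>v w) $ i = T - w $ i - (\<Sum>j\<in>N. w $ j)"
    if "i < p+q+2" and "{j. j < p+q+2 \<and> U_graph p q i j} = N" for i N
    using compl_adj_mult_vec_nth[OF \<open>w \<in> carrier_vec (p+q+2)\<close> that(1), of "U_graph p q"]
      U_graph_irrefl[of i] sum_U_cell_vec[of a b c d e g h, folded w_def] that(2)
    unfolding A_def T_def by simp
  note nth = U_cell_vec_nth[where a = a and b = b and c = c and d = d and e = e and g = g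
      and h = h, folded w_def]
  note pendant_sums = U_cell_vec_pendant_sums[of a b c d e g h, folded w_def]
  have "{1..p} = insert 1 {2..p}" "{p+2..p+q+1} = {p+2, p+3} \<union> {p+4..p+q} \<union> {p+q+1}"
    using p q by auto
  then have "(\<Sum>j=1..p. w $ j) = c + (real p - 1)*b"
    and "(\<Sum>j=p+2..p+q+1. w $ j) = 2*e + (real q - 3)*g + h"
    using q nth pendant_sums by (simp_all add: sum.union_disjoint)
  note sums = this
  show "(A *\<^sub>v w) $ 0 = T - a - (c + (real p - 1)*b)"
    using row[OF _ U_neighbours_centre_K] nth(1) sums(1) by simp
  show "(A *\<^sub>v w) $ 1 = T - c - (a + h)"
    using row[OF _ U_neighbours_joint_K] nth(1,2,8) q by simp
  show "2 \<le> i \<Longrightarrow> i \<le> p \<Longrightarrow> (A *\<^sub>v w) $ i = T - b - a"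
    using row[OF _ U_neighbours_pendant_K] nth(1,3) by simp
  show "(A *\<^sub>v w) $ (p+1) = T - d - (2*e + (real q - 3)*g + h)"
    using row[OF _ U_neighbours_centre_S] nth(4) sums(2) by simp
  show "(A *\<^sub>v w) $ (p+2) = T - e - (d + e)"
    using row[OF _ U_neighbours_triangle(1)] nth(4,5,6) q by simp
  show "(A *\<^sub>v w) $ (p+3) = T - e - (d + e)"
    using row[OF _ U_neighbours_triangle(2)] nth(4,5,6) q by simp
  show "p+4 \<le> i \<Longrightarrow> i \<le> p+q \<Longrightarrow> (A *\<^sub>v w) $ i = T - g - d"
    using row[OF _ U_neighbours_pendant_S] nth(4,7) by simp
  show "(A *\<^sub>v w) $ (p+q+1) = T - h - (c + d)"
    using row[OF _ U_neighbours_joint_S] nth(2,4,8) p by simp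
qed

lemma U_quotient_eqs_imp_eigen:
  assumes "U_quotient_eqs p q k a b c d e g h S"
  shows "adj_matrix (p+q+2) (compl_graph (U_graph p q)) *\<^sub>v U_cell_vec p q a b c d e g h
           = k \<cdot>\<^sub>v U_cell_vec p q a b c d e g h"
    (is "?A *\<^sub>v ?w = k \<cdot>\<^sub>v ?w")
proof (rule eq_vecI)
  note eqs = assms[unfolded U_quotient_eqs_def]
  note rows = U_compl_mult_cell_vec[where a = a and b = b and c = c and d = d and e = e and g = g
      and h = h]
  note nth = U_cell_vec_nth[where a = a and b = b and c = c and d = d and e = e and g = g
      and h = h]
  fix i assume "i < dim_vec (k \<cdot>\<^sub>v ?w)"
  then have "i < p+q+2" by simp
  then show "(?A *\<^sub>v ?w) $ i = (k \<cdot>\<^sub>v ?w) $ i"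
  proof (cases rule: U_vertex_cases)
    case 1 then show ?thesis using rows(1) nth(1) eqs p q by (simp add: algebra_simps)
  next
    case 2 then show ?thesis using rows(2) nth(2) eqs p q by (simp add: algebra_simps)
  next
    case 3 then show ?thesis using rows(3)[OF 3] nth(3)[OF 3] eqs p q by (simp add: algebra_simps)
  next
    case 4 then show ?thesis using rows(4) nth(4) eqs p q by (simp add: algebra_simps)
  next
    case 5 then show ?thesis using rows(5) nth(5) eqs p q by (simp add: algebra_simps)
  next
    case 6 then show ?thesis using rows(6) nth(6) eqs p q by (simp add: algebra_simps)
  next
    case 7 then show ?thesis using rows(7)[OF 7] nth(7)[OF 7] eqs p q by (simp add: algebra_simps)
  next
    case 8 then show ?thesis using rows(8) nth(8) eqs p q by (simp add: algebra_simps)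
  qed
qed (simp add: adj_matrix_def)

lemma U_compl_eigenvalue_of_root:
  assumes "f_poly (int p) (int q) k = 0" and "k < -2"
  shows "eigenvalue (adj_matrix (p+q+2) (compl_graph (U_graph p q))) k"
proof -
  obtain a b c d e g h S where "b \<noteq> 0" and eqs: "U_quotient_eqs p q k a b c d e g h S"
    using U_quotient_eqs_solvable[OF assms] by blast
  let ?w = "U_cell_vec p q a b c d e g h"
  have total: "a + (real p - 1)*b + c + d + 2*e + (real q - 3)*g + h = S"
    and row_b: "(k+1)*b + a = S"
    using eqs unfolding U_quotient_eqs_def by blast+
  have "?w \<noteq> 0\<^sub>v (p+q+2)"
  proof
    assume w0: "?w = 0\<^sub>v (p+q+2)"
    then have "a = 0"
      using U_cell_vec_nth(1)[of a b c d e g h] by simp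
    moreover have "S = 0"
      using w0 sum_U_cell_vec[of a b c d e g h] total
      by simp
    ultimately have "(k+1) * b = 0"
      using row_b by simp
    with \<open>b \<noteq> 0\<close> \<open>k < -2\<close> show False by simp
  qed
  moreover have "?w \<in> carrier_vec (p+q+2)"
    by (rule carrier_vecI) simp
  moreover have "dim_row (adj_matrix (p+q+2) (compl_graph (U_graph p q))) = p+q+2"
    by (simp add: adj_matrix_def)
  ultimately show ?thesis
    using U_quotient_eqs_imp_eigen[OF eqs] unfolding eigenvalue_def eigenvector_def by metis
qed

lemma U_compl_eigenvector_eq_cell_vec:
  assumes v: "v \<in> carrier_vec (p+q+2)"
    and Av: "adj_matrix (p+q+2) (compl_graph (U_graph p q)) *\<^sub>v v = k \<cdot>\<^sub>v v"
    and "k \<noteq> -1" and "k \<noteq> 0"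
  defines "S \<equiv> \<Sum>j<p+q+2. v $ j"
  shows "v = U_cell_vec p q (v $ 0) ((S - v $ 0) / (k+1)) (v $ 1) (v $ (p+1)) (v $ (p+2))
                ((S - v $ (p+1)) / (k+1)) (v $ (p+q+1))"
proof -
  have row: "(k+1) * v $ i + (\<Sum>j\<in>N. v $ j) = S"
    if "i < p+q+2" and "{j. j < p+q+2 \<and> U_graph p q i j} = N" for i N
  proof -
    have "(adj_matrix (p+q+2) (compl_graph (U_graph p q)) *\<^sub>v v) $ i = k * v $ i"
      using Av v that(1) by simp
    then show ?thesis
      using compl_adj_mult_vec_nth[OF v that(1), of "U_graph p q"] U_graph_irrefl[of i] that(2)
      by (simp add: S_def algebra_simps)
  qed
  have "k + 1 \<noteq> 0" using \<open>k \<noteq> -1\<close> by simp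
  define a c d e h where "a = v $ 0" and "c = v $ 1" and "d = v $ (p+1)" and "e = v $ (p+2)"
    and "h = v $ (p+q+1)"
  define b g where "b = (S - a) / (k+1)" and "g = (S - d) / (k+1)"
  have pendant_K: "v $ i = b" if "2 \<le> i" "i \<le> p" for i
    using row[OF _ U_neighbours_pendant_K[OF that]] that \<open>k + 1 \<noteq> 0\<close>
    by (simp add: a_def b_def field_simps)
  have pendant_S: "v $ i = g" if "p+4 \<le> i" "i \<le> p+q" for i
    using row[OF _ U_neighbours_pendant_S[OF that]] that \<open>k + 1 \<noteq> 0\<close>
    by (simp add: d_def g_def field_simps)
  have triangle: "v $ (p+3) = e"
  proof -
    have "k * (v $ (p+3) - e) = ((k+1) * v $ (p+3) + (d + e)) - ((k+1) * e + (d + v $ (p+3)))"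
      by (simp add: algebra_simps)
    also have "\<dots> = 0"
      using row[OF _ U_neighbours_triangle(1)] row[OF _ U_neighbours_triangle(2)] q
      by (simp add: d_def e_def)
    finally show ?thesis
      using \<open>k \<noteq> 0\<close> by simp
  qed
  have "v = U_cell_vec p q a b c d e g h"
  proof (rule eq_vecI)
    fix i assume "i < dim_vec (U_cell_vec p q a b c d e g h)"
    then have "i < p+q+2" by simp
    then show "v $ i = U_cell_vec p q a b c d e g h $ i"
      using U_cell_vec_nth[where a = a and b = b and c = c and d = d and e = e and g = g and h = h]
        pendant_K pendant_S triangle
      by (cases rule: U_vertex_cases) (simp_all add: a_def c_def d_def e_def h_def)
  qed (use v in simp)
  then show ?thesis
    unfolding a_def b_def c_def d_def e_def g_def h_def .
qed

text \<open>The cells 2..p and p+4..p+q may be empty, so the equations for b and g do not follow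
  from the eigen-equation and are assumed.\<close>
lemma U_cell_vec_eigen_imp_quotient_eqs:
  fixes a b c d e g h :: real
  defines "S \<equiv> a + (real p - 1)*b + c + d + 2*e + (real q - 3)*g + h"
  assumes eigen: "adj_matrix (p+q+2) (compl_graph (U_graph p q)) *\<^sub>v U_cell_vec p q a b c d e g h
      = k \<cdot>\<^sub>v U_cell_vec p q a b c d e g h"
    and "(k+1)*b + a = S" and "(k+1)*g + d = S"
  shows "U_quotient_eqs p q k a b c d e g h S"
proof -
  let ?A = "adj_matrix (p+q+2) (compl_graph (U_graph p q))"
  let ?w = "U_cell_vec p q a b c d e g h"
  have Aw: "(?A *\<^sub>v ?w) $ i = k * ?w $ i" if "i < p+q+2" for i
    using eigen that by (metis dim_vec_U_cell_vec index_smult_vec(1))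
  note rows = U_compl_mult_cell_vec[where a = a and b = b and c = c and d = d and e = e and g = g
      and h = h]
  note nth = U_cell_vec_nth[where a = a and b = b and c = c and d = d and e = e and g = g
      and h = h]
  have "(k+1)*a + (real p - 1)*b + c = S"
    using Aw[of 0] rows(1) nth(1) by (simp add: S_def algebra_simps)
  moreover have "(k+1)*c + a + h = S"
    using Aw[of 1] rows(2) nth(2) by (simp add: S_def algebra_simps)
  moreover have "(k+1)*d + 2*e + (real q - 3)*g + h = S"
    using Aw[of "p+1"] rows(4) nth(4) by (simp add: S_def algebra_simps)
  moreover have "(k+2)*e + d = S"
    using Aw[of "p+2"] rows(5) nth(5) q by (simp add: S_def algebra_simps)
  moreover have "(k+1)*h + c + d = S"
    using Aw[of "p+q+1"] rows(8) nth(8) by (simp add: S_def algebra_simps)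
  ultimately show ?thesis
    using assms(3,4) unfolding U_quotient_eqs_def S_def by simp
qed

lemma U_compl_eigenvalue_imp_root:
  assumes ev: "eigenvalue (adj_matrix (p+q+2) (compl_graph (U_graph p q))) k"
    and "k \<noteq> -1" and "k \<noteq> 0"
  shows "f_poly (int p) (int q) k = 0"
proof -
  obtain v where v: "v \<in> carrier_vec (p+q+2)" and "v \<noteq> 0\<^sub>v (p+q+2)"
    and Av: "adj_matrix (p+q+2) (compl_graph (U_graph p q)) *\<^sub>v v = k \<cdot>\<^sub>v v"
    using ev unfolding eigenvalue_def eigenvector_def by (auto simp: adj_matrix_def)
  define S where "S = (\<Sum>j<p+q+2. v $ j)"
  define a b c d e g h where "a = v $ 0" and "b = (S - v $ 0) / (k+1)" and "c = v $ 1"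
    and "d = v $ (p+1)" and "e = v $ (p+2)" and "g = (S - v $ (p+1)) / (k+1)" and "h = v $ (p+q+1)"
  have v_cells: "v = U_cell_vec p q a b c d e g h"
    using U_compl_eigenvector_eq_cell_vec[OF v Av assms(2,3)]
    unfolding S_def a_def b_def c_def d_def e_def g_def h_def .
  have S: "S = a + (real p - 1)*b + c + d + 2*e + (real q - 3)*g + h"
    using sum_U_cell_vec[of a b c d e g h] v_cells
    unfolding S_def by simp
  have "k + 1 \<noteq> 0"
    using \<open>k \<noteq> -1\<close> by simp
  then have "(k+1)*b + a = S" and "(k+1)*g + d = S"
    by (simp_all add: a_def b_def d_def g_def field_simps)
  moreover have "adj_matrix (p+q+2) (compl_graph (U_graph p q)) *\<^sub>v U_cell_vec p q a b c d e g h
      = k \<cdot>\<^sub>v U_cell_vec p q a b c d e g h"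
    using Av v_cells by simp
  ultimately have "U_quotient_eqs p q k a b c d e g h S"
    unfolding S by (intro U_cell_vec_eigen_imp_quotient_eqs)
  moreover have "a \<noteq> 0 \<or> b \<noteq> 0 \<or> c \<noteq> 0 \<or> d \<noteq> 0 \<or> e \<noteq> 0 \<or> g \<noteq> 0 \<or> h \<noteq> 0"
  proof (rule ccontr)
    assume "\<not> ?thesis"
    then have "v = U_cell_vec p q 0 0 0 0 0 0 0"
      using v_cells by simp
    also have "\<dots> = 0\<^sub>v (p+q+2)"
      by (simp add: U_cell_vec_def zero_vec_def cong: if_cong)
    finally show False
      using \<open>v \<noteq> 0\<^sub>v (p+q+2)\<close> by contradiction
  qed
  ultimately show ?thesis
    by (rule U_quotient_eqs_imp_root)
qed

end

theorem mainTheorem7: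
  fixes p q :: nat
  assumes "p \<ge> 1" and "q \<ge> 3"
  shows "f_poly (int p) (int q) (lambda_min (p + q + 2) (compl_graph (U_graph p q))) = 0
         \<and> (\<forall>x. f_poly (int p) (int q) x = 0 \<longrightarrow>
                lambda_min (p + q + 2) (compl_graph (U_graph p q)) \<le> x)
         \<and> f_poly (int p) (int q) (-2) = -10
         \<and> lambda_min (p + q + 2) (compl_graph (U_graph p q)) < -2"
proof -
  let ?A = "adj_matrix (p+q+2) (compl_graph (U_graph p q))"
  let ?l = "lambda_min (p+q+2) (compl_graph (U_graph p q))"
  have root_eigenvalue: "eigenvalue ?A x" if "f_poly (int p) (int q) x = 0" "x < -2" for x
    using U_compl_eigenvalue_of_root[OF assms that] .
  obtain r where "r < -2" "f_poly (int p) (int q) r = 0"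
    using f_poly_root_below_minus_two by blast
  then have "eigenvalue ?A r"
    by (rule root_eigenvalue[rotated])
  then have "?l \<le> r" and "eigenvalue ?A ?l"
    by (rule lambda_min_le, rule eigenvalue_lambda_min)
  with \<open>r < -2\<close> have "?l < -2" by simp
  then have "f_poly (int p) (int q) ?l = 0"
    using U_compl_eigenvalue_imp_root[OF assms \<open>eigenvalue ?A ?l\<close>] by simp
  moreover have "?l \<le> x" if "f_poly (int p) (int q) x = 0" for x
  proof (cases "x < -2")
    case True
    then show ?thesis using lambda_min_le root_eigenvalue that by blast
  next
    case False
    with \<open>?l < -2\<close> show ?thesis by simp
  qed
  ultimately show ?thesis
    using \<open>?l < -2\<close> f_poly_minus_two by blast
qed

end
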